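(* Let $w\in S_n$. If $|C(w)|=1$ then $|B(w)|=|R(w)|$, and if $|B(w)|=1$ then $|C(w)|=|R(w)|$.
   Context: $S_n$ is generated by the adjacent transpositions $s_1,\dots,s_{n-1}$. A reduced word for $w$ is a word $i_1\cdots i_k$ with $w=s_{i_1}\cdots s_{i_k}$ and $k$ minimal; $R(w)$ is the set of reduced words. A braid move replaces a factor (consecutive letters) $i(i+1)i$ by $(i+1)i(i+1)$ or vice versa; a commutation move replaces a factor $ij$ with $|i-j|>1$ by $ji$. $B(w)$ (resp. $C(w)$) is the set of equivalence classes of $R(w)$ under sequences of braid moves (resp. commutation moves). *)

theory Defs
  imports "HOL-Combinatorics.Transposition" "HOL-Combinatorics.Permutations"
begin

text \<open>S_n is realised as the permutations of {1..n}; s_i is the transposition of i and i+1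
  (1 \<le> i \<le> n-1). A word is a list of letters; its product is s_{i1} \<circ> ... \<circ> s_{ik}.\<close>

definition sgen :: "nat \<Rightarrow> nat \<Rightarrow> nat" where
  "sgen i = transpose i (Suc i)"

definition word_prod :: "nat list \<Rightarrow> nat \<Rightarrow> nat" where
  "word_prod ws = foldr (\<lambda>i f. sgen i \<circ> f) ws id"

definition is_word :: "nat \<Rightarrow> nat list \<Rightarrow> bool" where
  "is_word n ws \<longleftrightarrow> set ws \<subseteq> {1..<n}"

definition red_words :: "nat \<Rightarrow> (nat \<Rightarrow> nat) \<Rightarrow> nat list set" where
  "red_words n w = {ws. is_word n ws \<and> word_prod ws = w \<and>
      (\<forall>vs. is_word n vs \<and> word_prod vs = w \<longrightarrow> length ws \<le> length vs)}"

definition braid_move :: "nat list \<Rightarrow> nat list \<Rightarrow> bool" where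
  "braid_move u v \<longleftrightarrow> (\<exists>a b i.
      (u = a @ [i, Suc i, i] @ b \<and> v = a @ [Suc i, i, Suc i] @ b) \<or>
      (u = a @ [Suc i, i, Suc i] @ b \<and> v = a @ [i, Suc i, i] @ b))"

definition comm_move :: "nat list \<Rightarrow> nat list \<Rightarrow> bool" where
  "comm_move u v \<longleftrightarrow> (\<exists>a b i j. (i > Suc j \<or> j > Suc i) \<and>
      u = a @ [i, j] @ b \<and> v = a @ [j, i] @ b)"

definition braid_classes :: "nat \<Rightarrow> (nat \<Rightarrow> nat) \<Rightarrow> nat list set set" where
  "braid_classes n w = red_words n w //
     {(u, v). u \<in> red_words n w \<and> v \<in> red_words n w \<and> braid_move\<^sup>*\<^sup>* u v}"

definition comm_classes :: "nat \<Rightarrow> (nat \<Rightarrow> nat) \<Rightarrow> nat list set set" where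
  "comm_classes n w = red_words n w //
     {(u, v). u \<in> red_words n w \<and> v \<in> red_words n w \<and> comm_move\<^sup>*\<^sup>* u v}"

end

theory Submission
  imports Defs
begin

text \<open>Both moves preserve the product and the length, so they stay inside R(w).
  Commutation moves preserve the multiset of letters while a braid move changes it; hence if
  R(w) is one commutation class, no braid move applies to a reduced word and every braid class
  is a singleton. Dually, send the letters \<open>k \<le> c\<close> to the transposition (0 1) of S_3 and the
  others to (1 2): braid relations survive, so this is a braid-class invariant, while for
  \<open>c = min i j\<close> the commuting letters i, j go to non-commuting transpositions. Hence if R(w) is
  one braid class, no commutation move applies to a reduced word.\<close>

definition word_eval :: "('a \<Rightarrow> 'b \<Rightarrow> 'b) \<Rightarrow> 'a list \<Rightarrow> 'b \<Rightarrow> 'b" where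
  "word_eval g ws = foldr (\<lambda>k f. g k \<circ> f) ws id"

lemma word_prod_eq_word_eval: "word_prod = word_eval sgen"
  by (simp add: fun_eq_iff word_prod_def word_eval_def)

lemma word_eval_Nil [simp]: "word_eval g [] = id"
  and word_eval_Cons [simp]: "word_eval g (k # ws) = g k \<circ> word_eval g ws"
  by (simp_all add: word_eval_def)

lemma word_eval_append [simp]: "word_eval g (xs @ ys) = word_eval g xs \<circ> word_eval g ys"
  by (induction xs) auto

lemma bij_word_eval: "(\<And>k. bij (g k)) \<Longrightarrow> bij (word_eval g ws)"
  by (induction ws) (auto intro: bij_comp)

lemma word_eval_braid_move:
  assumes braid: "\<And>i. g i \<circ> g (Suc i) \<circ> g i = g (Suc i) \<circ> g i \<circ> g (Suc i)"
    and "braid_move u v"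
  shows "word_eval g u = word_eval g v"
proof -
  have "word_eval g [i, Suc i, i] = word_eval g [Suc i, i, Suc i]" for i
    using braid[of i] by (simp add: comp_assoc)
  then have "word_eval g (a @ [i, Suc i, i] @ b) = word_eval g (a @ [Suc i, i, Suc i] @ b)"
    for a b i
    by (simp only: word_eval_append)
  with \<open>braid_move u v\<close> show ?thesis
    unfolding braid_move_def by metis
qed

lemma word_eval_braid_equiv:
  assumes "\<And>i. g i \<circ> g (Suc i) \<circ> g i = g (Suc i) \<circ> g i \<circ> g (Suc i)"
    and "braid_move\<^sup>*\<^sup>* u v"
  shows "word_eval g u = word_eval g v"
  using assms(2) by induction (simp_all add: word_eval_braid_move[where g = g, OF assms(1)])

lemma word_eval_comm_move:
  assumes comm: "\<And>i j. Suc i < j \<Longrightarrow> g i \<circ> g j = g j \<circ> g i"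
    and "comm_move u v"
  shows "word_eval g u = word_eval g v"
proof -
  from \<open>comm_move u v\<close> obtain a b i j where
    ij: "Suc j < i \<or> Suc i < j" and "u = a @ [i, j] @ b" "v = a @ [j, i] @ b"
    unfolding comm_move_def by blast
  moreover have "word_eval g [i, j] = word_eval g [j, i]"
    using ij comm[of i j] comm[of j i] by auto
  then have "word_eval g (a @ [i, j] @ b) = word_eval g (a @ [j, i] @ b)"
    by (simp only: word_eval_append)
  ultimately show ?thesis
    by simp
qed

lemma sgen_braid: "sgen i \<circ> sgen (Suc i) \<circ> sgen i = sgen (Suc i) \<circ> sgen i \<circ> sgen (Suc i)"
  by (auto simp: sgen_def transpose_def fun_eq_iff)

lemma sgen_comm: "Suc i < j \<Longrightarrow> sgen i \<circ> sgen j = sgen j \<circ> sgen i"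
  by (auto simp: sgen_def transpose_def fun_eq_iff)


lemma red_words_same_letters:
  assumes "u \<in> red_words n w" "set v = set u" "length v = length u" "word_prod v = word_prod u"
  shows "v \<in> red_words n w"
  using assms unfolding red_words_def is_word_def by auto

lemma red_words_braid_move:
  assumes "u \<in> red_words n w" "braid_move u v"
  shows "v \<in> red_words n w"
proof (rule red_words_same_letters[OF assms(1)])
  show "set v = set u" "length v = length u"
    using assms(2) unfolding braid_move_def by auto
  show "word_prod v = word_prod u"
    using word_eval_braid_move[where g = sgen, OF sgen_braid assms(2)] by (simp add: word_prod_eq_word_eval)
qed

lemma red_words_comm_move:
  assumes "u \<in> red_words n w" "comm_move u v"
  shows "v \<in> red_words n w"
proof (rule red_words_same_letters[OF assms(1)])
  show "set v = set u" "length v = length u"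
    using assms(2) unfolding comm_move_def by auto
  show "word_prod v = word_prod u"
    using word_eval_comm_move[where g = sgen, OF sgen_comm assms(2)] by (simp add: word_prod_eq_word_eval)
qed


lemma mset_comm_equiv: "comm_move\<^sup>*\<^sup>* u v \<Longrightarrow> mset u = mset v"
  by (induction rule: rtranclp_induct) (auto simp: comm_move_def)

lemma mset_braid_move: "braid_move u v \<Longrightarrow> mset u \<noteq> mset v"
proof -
  assume "braid_move u v"
  then obtain a b i where
    "u = a @ [i, Suc i, i] @ b \<and> v = a @ [Suc i, i, Suc i] @ b \<or>
     u = a @ [Suc i, i, Suc i] @ b \<and> v = a @ [i, Suc i, i] @ b"
    unfolding braid_move_def by blast
  then have "count (mset u) i \<noteq> count (mset v) i"
    by auto
  then show ?thesis
    by auto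
qed

definition collapse_S3 :: "nat \<Rightarrow> nat \<Rightarrow> nat \<Rightarrow> nat" where
  "collapse_S3 c k = (if k \<le> c then transpose 0 1 else transpose 1 2)"

lemma collapse_S3_braid:
  "collapse_S3 c i \<circ> collapse_S3 c (Suc i) \<circ> collapse_S3 c i =
   collapse_S3 c (Suc i) \<circ> collapse_S3 c i \<circ> collapse_S3 c (Suc i)"
  by (auto simp: collapse_S3_def transpose_def fun_eq_iff)

lemma bij_cancel_outer:
  assumes "f \<circ> x \<circ> h = f \<circ> y \<circ> h" "bij f" "bij h"
  shows "x = y"
proof
  fix z
  obtain z' where "z = h z'"
    using \<open>bij h\<close> by (metis bij_pointE)
  then show "x z = y z"
    using fun_cong[OF assms(1), of z'] bij_is_inj[OF \<open>bij f\<close>] by (simp add: inj_eq)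
qed

lemma comm_move_changes_collapse_S3:
  assumes "comm_move u v"
  shows "\<exists>c. word_eval (collapse_S3 c) u \<noteq> word_eval (collapse_S3 c) v"
proof -
  from assms obtain a b i j where
    ij: "Suc j < i \<or> Suc i < j" and u: "u = a @ [i, j] @ b" and v: "v = a @ [j, i] @ b"
    unfolding comm_move_def by blast
  define g where "g = collapse_S3 (min i j)"
  have "(g i \<circ> g j) 0 \<noteq> (g j \<circ> g i) 0"
    using ij by (auto simp: g_def collapse_S3_def transpose_def)
  then have "g i \<circ> g j \<noteq> g j \<circ> g i"
    by metis
  moreover have "bij (word_eval g ws)" for ws
    by (rule bij_word_eval) (simp add: g_def collapse_S3_def)
  ultimately have "word_eval g a \<circ> (g i \<circ> g j) \<circ> word_eval g b \<noteq>
                   word_eval g a \<circ> (g j \<circ> g i) \<circ> word_eval g b"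
    using bij_cancel_outer by blast
  then show ?thesis
    unfolding g_def u v by (auto simp: comp_assoc)
qed


lemma rel_of_single_class:
  assumes "card (R // {(u, v). u \<in> R \<and> v \<in> R \<and> M\<^sup>*\<^sup>* u v}) = 1" "u \<in> R" "v \<in> R"
  shows "M\<^sup>*\<^sup>* u v"
proof -
  let ?E = "{(u, v). u \<in> R \<and> v \<in> R \<and> M\<^sup>*\<^sup>* u v}"
  obtain X where X: "R // ?E = {X}"
    using assms(1) card_1_singletonE by blast
  have "?E `` {u} \<in> R // ?E" "?E `` {v} \<in> R // ?E"
    using assms(2,3) by (blast intro: quotientI)+
  with X have "v \<in> ?E `` {u}"
    using assms(3) by auto
  then show ?thesis by auto
qed

lemma card_classes_no_moves:
  assumes "\<And>u v. u \<in> R \<Longrightarrow> \<not> M u v"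
  shows "card (R // {(u, v). u \<in> R \<and> v \<in> R \<and> M\<^sup>*\<^sup>* u v}) = card R"
proof -
  have "M\<^sup>*\<^sup>* u v \<longleftrightarrow> u = v" if "u \<in> R" for u v
    using assms[OF that] by (metis converse_rtranclpE rtranclp.rtrancl_refl)
  then have "R // {(u, v). u \<in> R \<and> v \<in> R \<and> M\<^sup>*\<^sup>* u v} = (\<lambda>x. {x}) ` R"
    unfolding quotient_def by auto
  then show ?thesis
    by (simp add: card_image)
qed

lemma no_braid_move_if_one_comm_class:
  assumes "card (comm_classes n w) = 1" "u \<in> red_words n w"
  shows "\<not> braid_move u v"
proof
  assume braid: "braid_move u v"
  with assms have "comm_move\<^sup>*\<^sup>* u v"
    using red_words_braid_move unfolding comm_classes_def by (blast intro: rel_of_single_class)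
  then show False
    using mset_comm_equiv mset_braid_move[OF braid] by blast
qed

lemma no_comm_move_if_one_braid_class:
  assumes "card (braid_classes n w) = 1" "u \<in> red_words n w"
  shows "\<not> comm_move u v"
proof
  assume comm: "comm_move u v"
  with assms have "braid_move\<^sup>*\<^sup>* u v"
    using red_words_comm_move unfolding braid_classes_def by (blast intro: rel_of_single_class)
  then show False
    using word_eval_braid_equiv[where g = "collapse_S3 _", OF collapse_S3_braid] comm_move_changes_collapse_S3[OF comm]
    by blast
qed

theorem lemma4p7:
  fixes n :: nat and w :: "nat \<Rightarrow> nat"
  assumes "w permutes {1..n}"
  shows "(card (comm_classes n w) = 1 \<longrightarrow> card (braid_classes n w) = card (red_words n w)) \<and>
         (card (braid_classes n w) = 1 \<longrightarrow> card (comm_classes n w) = card (red_words n w))"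
proof (intro conjI impI)
  assume "card (comm_classes n w) = 1"
  then show "card (braid_classes n w) = card (red_words n w)"
    unfolding braid_classes_def
    by (intro card_classes_no_moves no_braid_move_if_one_comm_class)
next
  assume "card (braid_classes n w) = 1"
  then show "card (comm_classes n w) = card (red_words n w)"
    unfolding comm_classes_def
    by (intro card_classes_no_moves no_comm_move_if_one_braid_class)
qed

end
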